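(* Let $u$ be any element of $W=S_n$ and let $U=[e,u]_R$. Then the multiplication map $W/U\times U\to W$, $(x,y)\mapsto xy$, is surjective.
   Context: $S_n$ is the symmetric group with product $(uv)(i)=u(v(i))$, generated by adjacent transpositions. The length $\ell(w)$ is the number of inversions $\{(i,j): i<j,\ w(i)>w(j)\}$. Right weak order: $v\leq_R w$ iff $w=vz$ with $\ell(w)=\ell(v)+\ell(z)$; $[e,u]_R=\{v:v\leq_R u\}$. For $U\subseteq W$, $W/U=\{w\in W:\ell(wu)=\ell(w)+\ell(u)\ \forall u\in U\}$. *)

theory Defs
  imports "HOL-Combinatorics.Combinatorics"
begin

text \<open>S_n as permutations of {0..<n} (functions nat => nat fixing everything outside);
  product (u v)(i) = u (v i) is composition u o v.\<close>

definition Sym :: "nat \<Rightarrow> (nat \<Rightarrow> nat) set" where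
  "Sym n = {p. p permutes {..<n}}"

definition perm_length :: "nat \<Rightarrow> (nat \<Rightarrow> nat) \<Rightarrow> nat" where
  "perm_length n w = card {(i, j). i < j \<and> j < n \<and> w i > w j}"

definition weak_le_R :: "nat \<Rightarrow> (nat \<Rightarrow> nat) \<Rightarrow> (nat \<Rightarrow> nat) \<Rightarrow> bool" where
  "weak_le_R n v w \<longleftrightarrow> (\<exists>z \<in> Sym n. w = v \<circ> z \<and>
      perm_length n w = perm_length n v + perm_length n z)"

definition weak_interval_R :: "nat \<Rightarrow> (nat \<Rightarrow> nat) \<Rightarrow> (nat \<Rightarrow> nat) set" where
  "weak_interval_R n u = {v \<in> Sym n. weak_le_R n v u}"

definition right_quot :: "nat \<Rightarrow> (nat \<Rightarrow> nat) set \<Rightarrow> (nat \<Rightarrow> nat) set" where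
  "right_quot n U = {w \<in> Sym n. \<forall>u \<in> U. perm_length n (w \<circ> u) = perm_length n w + perm_length n u}"

end

theory Submission
  imports Defs
begin

(* Inversion sets (by position) turn lengths into cardinalities: l(p q^-1) is the size of the
   symmetric difference of the inversion sets of p and q, so containment of inversion sets
   means w = x y with l(w) = l(x) + l(y).  Given w, choose y in [e,u]_R of maximal length whose
   inversion set lies in that of w, and put x = w y^-1.  By subadditivity of l, x lies in W/U
   as soon as l(x u) = l(x) + l(u).  If that failed, climb from y towards u one simple
   reflection s at a time: if s is a right descent of w, then y s is a longer admissible
   factor; otherwise pass to (w s, y s), which has the same quotient x, and pull the longer
   factor obtained by induction back to w.  Either way the maximality of y is contradicted. *)

definition inversions :: "nat \<Rightarrow> (nat \<Rightarrow> nat) \<Rightarrow> (nat \<times> nat) set" where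
  "inversions n p = {(i, j). i < j \<and> j < n \<and> p j < p i}"

lemma perm_length_eq_card_inversions: "perm_length n p = card (inversions n p)"
  by (simp add: perm_length_def inversions_def)

lemma finite_inversions: "finite (inversions n p)"
  by (rule finite_subset[of _ "{..<n} \<times> {..<n}"]) (auto simp: inversions_def)

lemma inversions_id [simp]: "inversions n id = {}"
  by (auto simp: inversions_def)

lemma perm_length_id [simp]: "perm_length n id = 0"
  by (simp add: perm_length_eq_card_inversions)

lemma perm_length_comp_inv:
  assumes p: "p permutes {..<n}" and q: "q permutes {..<n}"
  shows "perm_length n (p \<circ> inv q) =
    card (sym_diff (inversions n p) (inversions n q))"
proof -
  let ?D = "sym_diff (inversions n p) (inversions n q)"
  \<comment> \<open>Relabelling positions by \<open>q\<close> maps the pairs on which \<open>p\<close> and \<open>q\<close> disagree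
    onto the inversions of \<open>p \<circ> inv q\<close>.\<close>
  define f where "f = (\<lambda>(a, b). (min (q a) (q b), max (q a) (q b)))"
  have inj: "q a = q b \<longleftrightarrow> a = b" for a b
    using permutes_inj[OF q] by (auto dest: injD)
  have "inj_on f ?D"
  proof (rule inj_onI, clarify)
    fix a b c d assume "(a, b) \<in> ?D" "(c, d) \<in> ?D" "f (a, b) = f (c, d)"
    then show "a = c \<and> b = d"
      unfolding f_def inversions_def min_def max_def using inj by (auto split: if_splits)
  qed
  moreover have "f ` ?D = inversions n (p \<circ> inv q)"
  proof (intro equalityI subsetI)
    fix z assume "z \<in> f ` ?D"
    then obtain a b where ab: "(a, b) \<in> ?D" and z: "z = f (a, b)" by auto
    then have "a < b" "b < n" "q a \<noteq> q b" "p a \<noteq> p b"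
      using inj permutes_inj[OF p] by (auto simp: inversions_def dest: injD)
    moreover have "q a < n" "q b < n"
      using \<open>a < b\<close> \<open>b < n\<close> permutes_in_image[OF q] by auto
    ultimately show "z \<in> inversions n (p \<circ> inv q)"
      using ab z by (auto simp: f_def inversions_def permutes_inverses(2)[OF q] min_def max_def)
  next
    fix z assume "z \<in> inversions n (p \<circ> inv q)"
    then obtain i j where z: "z = (i, j)" "i < j" "j < n" "p (inv q j) < p (inv q i)"
      by (auto simp: inversions_def)
    define a b where "a = inv q i" and "b = inv q j"
    have ab: "a < n" "b < n" "q a = i" "q b = j"
      using z permutes_in_image[OF permutes_inv[OF q]] permutes_inverses(1)[OF q]
      by (auto simp: a_def b_def)
    then have "a \<noteq> b" using z by auto
    with ab have "(min a b, max a b) \<in> ?D" "f (min a b, max a b) = z"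
      using z by (auto simp: inversions_def f_def a_def b_def min_def max_def)
    then show "z \<in> f ` ?D" by force
  qed
  ultimately show ?thesis
    by (metis card_image perm_length_eq_card_inversions)
qed

lemma perm_length_inv: "q permutes {..<n} \<Longrightarrow> perm_length n (inv q) = perm_length n q"
  using perm_length_comp_inv[of id n q] by (simp add: perm_length_eq_card_inversions)

lemma perm_length_comp_le:
  assumes a: "a permutes {..<n}" and b: "b permutes {..<n}"
  shows "perm_length n (a \<circ> b) \<le> perm_length n a + perm_length n b"
proof -
  have "perm_length n (a \<circ> b) = perm_length n (a \<circ> inv (inv b))"
    using permutes_inv_inv[OF b] by simp
  also have "\<dots> \<le> card (inversions n a) + card (inversions n (inv b))"
    unfolding perm_length_comp_inv[OF a permutes_inv[OF b]]
    by (intro card_Un_le[THEN order_trans] add_mono card_mono) (auto simp: finite_inversions)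
  also have "\<dots> = perm_length n a + perm_length n b"
    using perm_length_inv[OF b] by (simp add: perm_length_eq_card_inversions)
  finally show ?thesis .
qed

lemma perm_length_comp_inv_of_inversions_subset:
  assumes "w permutes {..<n}" "y permutes {..<n}" and "inversions n y \<subseteq> inversions n w"
  shows "perm_length n w = perm_length n (w \<circ> inv y) + perm_length n y"
proof -
  have "sym_diff (inversions n w) (inversions n y) = inversions n w - inversions n y"
    using assms(3) by blast
  then show ?thesis
    using perm_length_comp_inv[OF assms(1,2)] assms(3) finite_inversions[of n]
    by (simp add: perm_length_eq_card_inversions card_Diff_subset card_mono)
qed

abbreviation simple_refl :: "nat \<Rightarrow> nat \<Rightarrow> nat" where
  "simple_refl i \<equiv> Transposition.transpose i (Suc i)"

lemma simple_refl_permutes: "Suc i < n \<Longrightarrow> simple_refl i permutes {..<n}"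
  by (rule permutes_swap_id) auto

lemma map_prod_simple_refl_involution [simp]:
  "map_prod (simple_refl i) (simple_refl i) (map_prod (simple_refl i) (simple_refl i) z) = z"
  by (cases z) simp

(* The pair (i, Suc i) is handled separately: map_prod swaps it to (Suc i, i). *)
lemma inversions_comp_simple_refl:
  assumes p: "p permutes {..<n}" and i: "Suc i < n"
  shows "inversions n (p \<circ> simple_refl i) =
    map_prod (simple_refl i) (simple_refl i) ` (inversions n p - {(i, Suc i)})
      \<union> ({(i, Suc i)} - inversions n p)"
proof -
  let ?g = "map_prod (simple_refl i) (simple_refl i)"
  have "p i \<noteq> p (Suc i)"
    using permutes_inj[OF p] by (metis injD n_not_Suc_n)
  then have "z \<in> inversions n (p \<circ> simple_refl i) \<longleftrightarrow>
      ?g z \<in> inversions n p - {(i, Suc i)} \<or> z \<in> {(i, Suc i)} - inversions n p" for z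
    using i by (cases z) (auto simp: inversions_def transpose_def)
  then show ?thesis
    by (auto intro: image_eqI[where x = "?g z" for z])
qed

lemma adjacent_mem_inversions_comp_simple_refl:
  assumes p: "p permutes {..<n}" and i: "Suc i < n"
  shows "(i, Suc i) \<in> inversions n (p \<circ> simple_refl i) \<longleftrightarrow> (i, Suc i) \<notin> inversions n p"
proof -
  have "p i \<noteq> p (Suc i)"
    using permutes_inj[OF p] by (metis injD n_not_Suc_n)
  then show ?thesis
    using i by (auto simp: inversions_def)
qed

lemma perm_length_comp_simple_refl:
  assumes "p permutes {..<n}" "Suc i < n"
  shows "perm_length n (p \<circ> simple_refl i) =
    (if (i, Suc i) \<in> inversions n p then perm_length n p - 1 else perm_length n p + 1)"
proof -
  let ?g = "map_prod (simple_refl i) (simple_refl i)"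
  have "inj ?g"
    by (metis inj_def map_prod_simple_refl_involution)
  moreover have "(i, Suc i) \<notin> ?g ` (inversions n p - {(i, Suc i)})"
    by (auto simp: inversions_def transpose_def split: if_splits)
  then have "?g ` (inversions n p - {(i, Suc i)}) \<inter> ({(i, Suc i)} - inversions n p) = {}"
    by (simp only: disjoint_iff) blast
  ultimately have "perm_length n (p \<circ> simple_refl i) =
      card (inversions n p - {(i, Suc i)}) + card ({(i, Suc i)} - inversions n p)"
    unfolding inversions_comp_simple_refl[OF assms] perm_length_eq_card_inversions
    by (simp add: card_Un_disjoint finite_inversions card_image inj_on_subset)
  then show ?thesis
    using finite_inversions[of n p] by (simp add: perm_length_eq_card_inversions insert_Diff_if)
qed

lemma inversions_comp_simple_refl_mono:
  assumes "p permutes {..<n}" "q permutes {..<n}" "Suc i < n"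
    and "inversions n p \<subseteq> inversions n q"
    and "(i, Suc i) \<in> inversions n p \<longleftrightarrow> (i, Suc i) \<in> inversions n q"
  shows "inversions n (p \<circ> simple_refl i) \<subseteq> inversions n (q \<circ> simple_refl i)"
  unfolding inversions_comp_simple_refl[OF assms(1,3)] inversions_comp_simple_refl[OF assms(2,3)]
  using assms(4,5) by blast

lemma inversions_comp_simple_refl_subset:
  assumes y: "y permutes {..<n}" and i: "Suc i < n"
    and sub: "inversions n y \<subseteq> inversions n w"
    and y_asc: "(i, Suc i) \<notin> inversions n y" and w_desc: "(i, Suc i) \<in> inversions n w"
  shows "inversions n (y \<circ> simple_refl i) \<subseteq> inversions n w"
proof -
  have H: "w b < w a" if "a < b" "b < n" "y b < y a" for a b
    using sub that by (auto simp: inversions_def)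
  have "y i \<noteq> y (Suc i)"
    using permutes_inj[OF y] by (metis injD n_not_Suc_n)
  then have yi: "y i < y (Suc i)" and wi: "w (Suc i) < w i"
    using y_asc w_desc i by (auto simp: inversions_def)
  have "(simple_refl i a, simple_refl i b) \<in> inversions n w" if ab: "(a, b) \<in> inversions n y" for a b
  proof -
    have "a < b" "b < n" "y b < y a" "(a, b) \<noteq> (i, Suc i)"
      using ab y_asc by (auto simp: inversions_def)
    consider "a = i \<or> a = Suc i" | "b = i" | "b = Suc i" "a < i" | "a \<notin> {i, Suc i}" "b \<notin> {i, Suc i}"
      using \<open>a < b\<close> \<open>(a, b) \<noteq> (i, Suc i)\<close> by fastforce
    then show ?thesis
    proof cases
      case 1
      then have "w b < w (Suc i)"
        using H[of "Suc i" b] yi \<open>a < b\<close> \<open>b < n\<close> \<open>y b < y a\<close> \<open>(a, b) \<noteq> (i, Suc i)\<close> by auto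
      then show ?thesis
        using 1 wi \<open>a < b\<close> \<open>b < n\<close> \<open>(a, b) \<noteq> (i, Suc i)\<close>
        by (auto simp: inversions_def transpose_def)
    next
      case 2
      then show ?thesis
        using H[of a i] wi \<open>a < b\<close> \<open>y b < y a\<close> i by (auto simp: inversions_def transpose_def)
    next
      case 3
      then show ?thesis
        using H[of a i] yi \<open>y b < y a\<close> i by (auto simp: inversions_def transpose_def)
    next
      case 4
      then show ?thesis
        using ab sub by (auto simp: transpose_def)
    qed
  qed
  then show ?thesis
    using w_desc y_asc by (auto simp: inversions_comp_simple_refl[OF y i])
qed

lemma exists_adjacent_inversion:
  assumes p: "p permutes {..<n}" and "p \<noteq> id"
  shows "\<exists>i. Suc i < n \<and> (i, Suc i) \<in> inversions n p"
proof (rule ccontr)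
  assume none: "\<not> ?thesis"
  have "i \<le> p i" if "i < n" for i
    using that
  proof (induction i)
    case (Suc i)
    have "p i \<noteq> p (Suc i)"
      using permutes_inj[OF p] by (metis injD n_not_Suc_n)
    with Suc none show ?case
      by (fastforce simp: inversions_def)
  qed simp
  then have "p = id"
    using permutes_natset_ge[OF p] by blast
  with assms show False by simp
qed

lemma perm_length_eq_0_iff:
  assumes "p permutes {..<n}"
  shows "perm_length n p = 0 \<longleftrightarrow> p = id"
  using exists_adjacent_inversion[OF assms] finite_inversions[of n p]
  by (auto simp: perm_length_eq_card_inversions)

lemma exists_left_descent:
  assumes z: "z permutes {..<n}" and "z \<noteq> id"
  shows "\<exists>i. Suc i < n \<and> perm_length n (simple_refl i \<circ> z) + 1 = perm_length n z"
proof -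
  have zi: "inv z permutes {..<n}"
    using permutes_inv[OF z] .
  have "inv z \<noteq> id"
    using assms permutes_inv_inv[OF z] by fastforce
  then obtain i where i: "Suc i < n" and desc: "(i, Suc i) \<in> inversions n (inv z)"
    using exists_adjacent_inversion[OF zi] by blast
  then have "perm_length n (inv z) > 0"
    using finite_inversions[of n "inv z"] by (auto simp: perm_length_eq_card_inversions card_gt_0_iff)
  moreover have "inv (simple_refl i \<circ> z) = inv z \<circ> simple_refl i"
    using o_inv_distrib[OF bij_transpose permutes_bij[OF z]] by simp
  then have "perm_length n (simple_refl i \<circ> z) = perm_length n (inv z \<circ> simple_refl i)"
    using perm_length_inv[OF permutes_compose[OF z simple_refl_permutes[OF i]]] by simp
  ultimately show ?thesis
    using i desc perm_length_comp_simple_refl[OF zi i] perm_length_inv[OF z] by auto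
qed

lemma weak_le_R_iff:
  assumes "y permutes {..<n}" "u permutes {..<n}"
  shows "weak_le_R n y u \<longleftrightarrow> perm_length n u = perm_length n y + perm_length n (inv y \<circ> u)"
proof
  assume "weak_le_R n y u"
  then obtain z where "u = y \<circ> z" "perm_length n u = perm_length n y + perm_length n z"
    by (auto simp: weak_le_R_def)
  moreover have "inv y \<circ> (y \<circ> z) = z"
    using permutes_inv_o(2)[OF assms(1)] by (simp add: o_assoc)
  ultimately show "perm_length n u = perm_length n y + perm_length n (inv y \<circ> u)"
    by simp
next
  assume "perm_length n u = perm_length n y + perm_length n (inv y \<circ> u)"
  moreover have "inv y \<circ> u \<in> Sym n" "u = y \<circ> (inv y \<circ> u)"
    using permutes_compose[OF assms(2) permutes_inv[OF assms(1)]] permutes_inv_o(1)[OF assms(1)]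
    by (simp_all add: Sym_def o_assoc)
  ultimately show "weak_le_R n y u"
    unfolding weak_le_R_def by blast
qed

lemma weak_le_R_trans:
  assumes a: "a permutes {..<n}" and "weak_le_R n a b" "weak_le_R n b c"
  shows "weak_le_R n a c"
proof -
  obtain z1 z2 where z: "z1 permutes {..<n}" "z2 permutes {..<n}"
    and "b = a \<circ> z1" "c = b \<circ> z2"
    and "perm_length n b = perm_length n a + perm_length n z1"
    and "perm_length n c = perm_length n b + perm_length n z2"
    using assms by (auto simp: weak_le_R_def Sym_def)
  moreover from this have "c = a \<circ> (z1 \<circ> z2)"
    by (simp add: o_assoc)
  moreover note perm_length_comp_le[OF a permutes_compose[OF z(2,1)]] perm_length_comp_le[OF z(1,2)]
  ultimately show ?thesis
    unfolding weak_le_R_def Sym_def using permutes_compose[OF z(2,1)] by force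
qed

lemma weak_le_R_exists_cover:
  assumes y: "y permutes {..<n}" and u: "u permutes {..<n}"
    and "weak_le_R n y u" and "y \<noteq> u"
  obtains i where "Suc i < n" "(i, Suc i) \<notin> inversions n y"
    "weak_le_R n (y \<circ> simple_refl i) u"
    "perm_length n (y \<circ> simple_refl i) = perm_length n y + 1"
    "perm_length n (inv (y \<circ> simple_refl i) \<circ> u) + 1 = perm_length n (inv y \<circ> u)"
proof -
  define z where "z = inv y \<circ> u"
  have z: "z permutes {..<n}"
    unfolding z_def using permutes_compose[OF u permutes_inv[OF y]] .
  have u_eq: "u = y \<circ> z"
    unfolding z_def using permutes_inv_o(1)[OF y] by (simp add: o_assoc)
  then have "z \<noteq> id"
    using \<open>y \<noteq> u\<close> by auto
  then obtain i where i: "Suc i < n"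
    and desc: "perm_length n (simple_refl i \<circ> z) + 1 = perm_length n z"
    using exists_left_descent[OF z] by blast
  let ?s = "simple_refl i"
  have s: "?s permutes {..<n}"
    using simple_refl_permutes[OF i] .
  have u_eq': "u = (y \<circ> ?s) \<circ> (?s \<circ> z)"
    using u_eq by (simp add: fun_eq_iff)
  have "perm_length n u \<le> perm_length n (y \<circ> ?s) + perm_length n (?s \<circ> z)"
    unfolding u_eq' by (rule perm_length_comp_le[OF permutes_compose[OF s y] permutes_compose[OF z s]])
  moreover have "perm_length n u = perm_length n y + perm_length n z"
    using \<open>weak_le_R n y u\<close> weak_le_R_iff[OF y u] z_def by simp
  moreover have "perm_length n (y \<circ> ?s) \<le> perm_length n y + 1"
    using perm_length_comp_simple_refl[OF y i] by (cases "(i, Suc i) \<in> inversions n y") simp_all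
  ultimately have len_ys: "perm_length n (y \<circ> ?s) = perm_length n y + 1"
    and len_u: "perm_length n u = perm_length n (y \<circ> ?s) + perm_length n (?s \<circ> z)"
    using desc by linarith+
  have "(i, Suc i) \<notin> inversions n y"
    using len_ys perm_length_comp_simple_refl[OF y i] by (auto split: if_splits)
  moreover have "weak_le_R n (y \<circ> ?s) u"
    unfolding weak_le_R_def Sym_def using permutes_compose[OF z s] u_eq' len_u by blast
  moreover have "inv (y \<circ> ?s) \<circ> u = ?s \<circ> z"
    using o_inv_distrib[OF permutes_bij[OF y] bij_transpose] by (simp add: z_def o_assoc)
  ultimately show ?thesis
    using that i len_ys desc z_def by simp
qed

lemma length_additive_of_weak_le_R:
  assumes x: "x permutes {..<n}" and v: "v permutes {..<n}"
    and "weak_le_R n v u" and "perm_length n (x \<circ> u) = perm_length n x + perm_length n u"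
  shows "perm_length n (x \<circ> v) = perm_length n x + perm_length n v"
proof -
  obtain c where c: "c permutes {..<n}" and "u = v \<circ> c"
    and "perm_length n u = perm_length n v + perm_length n c"
    using assms(3) by (auto simp: weak_le_R_def Sym_def)
  moreover have "perm_length n (x \<circ> u) \<le> perm_length n (x \<circ> v) + perm_length n c"
    using perm_length_comp_le[OF permutes_compose[OF v x] c] \<open>u = v \<circ> c\<close> by (simp add: o_assoc)
  ultimately show ?thesis
    using perm_length_comp_le[OF x v] assms(4) by linarith
qed

lemma weak_le_R_comp_simple_refl:
  assumes p: "p permutes {..<n}" and i: "Suc i < n" and "(i, Suc i) \<in> inversions n p"
  shows "weak_le_R n (p \<circ> simple_refl i) p"
proof -
  have "perm_length n (simple_refl i) = 1"
    using perm_length_comp_simple_refl[OF permutes_id i] by simp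
  moreover have "p = (p \<circ> simple_refl i) \<circ> simple_refl i"
    by (simp add: fun_eq_iff)
  moreover have "perm_length n p > 0"
    using assms(3) finite_inversions[of n p] by (auto simp: perm_length_eq_card_inversions card_gt_0_iff)
  then have "perm_length n p = perm_length n (p \<circ> simple_refl i) + 1"
    using perm_length_comp_simple_refl[OF p i] assms(3) by simp
  ultimately show ?thesis
    using simple_refl_permutes[OF i]
    by (auto simp: weak_le_R_def Sym_def intro!: bexI[of _ "simple_refl i"])
qed

lemma exists_right_factor_of_comp_simple_refl:
  assumes w: "w permutes {..<n}" and y: "y permutes {..<n}" and i: "Suc i < n"
    and w_asc: "(i, Suc i) \<notin> inversions n w"
    and sub: "inversions n y \<subseteq> inversions n (w \<circ> simple_refl i)" and "weak_le_R n y u"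
  shows "\<exists>y'. y' permutes {..<n} \<and> weak_le_R n y' u \<and> inversions n y' \<subseteq> inversions n w \<and>
    perm_length n y \<le> perm_length n y' + 1"
proof -
  let ?s = "simple_refl i"
  have s: "?s permutes {..<n}"
    using simple_refl_permutes[OF i] .
  have ws: "w \<circ> ?s permutes {..<n}"
    using permutes_compose[OF s w] .
  have ws_desc: "(i, Suc i) \<in> inversions n (w \<circ> ?s)"
    using adjacent_mem_inversions_comp_simple_refl[OF w i] w_asc by simp
  have w_eq: "w \<circ> ?s \<circ> ?s = w"
    by (simp add: fun_eq_iff)
  show ?thesis
  proof (cases "(i, Suc i) \<in> inversions n y")
    case True
    have "inversions n (y \<circ> ?s) \<subseteq> inversions n w"
      using inversions_comp_simple_refl_mono[OF y ws i sub] True ws_desc w_eq by simp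
    moreover have "weak_le_R n (y \<circ> ?s) u"
      using weak_le_R_trans[OF permutes_compose[OF s y] weak_le_R_comp_simple_refl[OF y i True]]
        \<open>weak_le_R n y u\<close> .
    moreover have "perm_length n y \<le> perm_length n (y \<circ> ?s) + 1"
      using perm_length_comp_simple_refl[OF y i] True by simp
    ultimately show ?thesis
      using permutes_compose[OF s y] by blast
  next
    case False
    have "inversions n (y \<circ> ?s) \<subseteq> inversions n (w \<circ> ?s)"
      using inversions_comp_simple_refl_subset[OF y i sub False ws_desc] .
    then have "inversions n (y \<circ> ?s \<circ> ?s) \<subseteq> inversions n w"
      using inversions_comp_simple_refl_mono[OF permutes_compose[OF s y] ws i]
        adjacent_mem_inversions_comp_simple_refl[OF y i] False ws_desc w_eq by simp
    then have "inversions n y \<subseteq> inversions n w"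
      by (simp add: o_assoc[symmetric])
    then show ?thesis
      using y \<open>weak_le_R n y u\<close> by auto
  qed
qed

lemma exists_longer_right_factor:
  assumes u: "u permutes {..<n}"
    and "w permutes {..<n}" "y permutes {..<n}" "weak_le_R n y u"
    and "inversions n y \<subseteq> inversions n w"
    and "perm_length n (w \<circ> inv y \<circ> u) \<noteq> perm_length n (w \<circ> inv y) + perm_length n u"
  shows "\<exists>y'. y' permutes {..<n} \<and> weak_le_R n y' u \<and> inversions n y' \<subseteq> inversions n w \<and>
    perm_length n y < perm_length n y'"
  using assms(2-)
proof (induction "perm_length n (inv y \<circ> u)" arbitrary: w y)
  case 0
  then have "inv y \<circ> u = id"
    using perm_length_eq_0_iff[OF permutes_compose[OF u permutes_inv[OF "0.prems"(2)]]] "0.hyps"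
    by (simp add: o_def)
  have "u = y \<circ> (inv y \<circ> u)"
    using permutes_inv_o(1)[OF "0.prems"(2)] by (simp add: o_assoc)
  also have "\<dots> = y"
    using \<open>inv y \<circ> u = id\<close> by simp
  finally have "u = y" .
  then have "w \<circ> inv y \<circ> u = w"
    using permutes_inv_o(2)[OF "0.prems"(2)] by (simp add: comp_assoc)
  then have "perm_length n (w \<circ> inv y \<circ> u) = perm_length n (w \<circ> inv y) + perm_length n u"
    using perm_length_comp_inv_of_inversions_subset[OF "0.prems"(1,2,4)] \<open>u = y\<close> by simp
  with "0.prems"(5) show ?case ..
next
  case (Suc k)
  have "y \<noteq> u"
  proof
    assume "y = u"
    then have "inv y \<circ> u = id"
      using permutes_inv_o(2)[OF Suc.prems(2)] by simp
    with Suc.hyps(2) show False by simp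
  qed
  then obtain i where i: "Suc i < n" and y_asc: "(i, Suc i) \<notin> inversions n y"
    and ys_le: "weak_le_R n (y \<circ> simple_refl i) u"
    and len_ys: "perm_length n (y \<circ> simple_refl i) = perm_length n y + 1"
    and "perm_length n (inv (y \<circ> simple_refl i) \<circ> u) + 1 = perm_length n (inv y \<circ> u)"
    using weak_le_R_exists_cover[OF Suc.prems(2) u Suc.prems(3)] by blast
  with Suc.hyps(2) have k: "k = perm_length n (inv (y \<circ> simple_refl i) \<circ> u)"
    by simp
  let ?s = "simple_refl i"
  have s: "?s permutes {..<n}"
    using simple_refl_permutes[OF i] .
  have ys: "y \<circ> ?s permutes {..<n}"
    using permutes_compose[OF s Suc.prems(2)] .
  show ?case
  proof (cases "(i, Suc i) \<in> inversions n w")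
    case True
    then show ?thesis
      using inversions_comp_simple_refl_subset[OF Suc.prems(2) i Suc.prems(4) y_asc] ys ys_le len_ys
      by auto
  next
    case w_asc: False
    \<comment> \<open>The pair \<open>(w s, y s)\<close> has the same quotient \<open>w y\<inverse>\<close>, and it is one step closer to \<open>u\<close>.\<close>
    have "w \<circ> ?s \<circ> inv (y \<circ> ?s) = w \<circ> inv y"
      using o_inv_distrib[OF permutes_bij[OF Suc.prems(2)] bij_transpose] by (simp add: fun_eq_iff)
    then have not_additive: "perm_length n (w \<circ> ?s \<circ> inv (y \<circ> ?s) \<circ> u) \<noteq>
        perm_length n (w \<circ> ?s \<circ> inv (y \<circ> ?s)) + perm_length n u"
      using Suc.prems(5) by simp
    have "inversions n (y \<circ> ?s) \<subseteq> inversions n (w \<circ> ?s)"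
      using inversions_comp_simple_refl_mono[OF Suc.prems(2,1) i Suc.prems(4)] y_asc w_asc by blast
    then obtain y2 where y2: "y2 permutes {..<n}" "weak_le_R n y2 u"
        "inversions n y2 \<subseteq> inversions n (w \<circ> ?s)"
      and len_y2: "perm_length n (y \<circ> ?s) < perm_length n y2"
      using Suc.hyps(1)[OF k permutes_compose[OF s Suc.prems(1)] ys ys_le _ not_additive] by blast
    then obtain y' where "y' permutes {..<n}" "weak_le_R n y' u" "inversions n y' \<subseteq> inversions n w"
      and "perm_length n y2 \<le> perm_length n y' + 1"
      using exists_right_factor_of_comp_simple_refl[OF Suc.prems(1) y2(1) i w_asc y2(3,2)] by blast
    with len_ys len_y2 show ?thesis
      by (intro exI[of _ y']) simp
  qed
qed

lemma id_mem_weak_interval_R: "u permutes {..<n} \<Longrightarrow> id \<in> weak_interval_R n u"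
  using weak_le_R_iff[OF permutes_id] by (simp add: weak_interval_R_def Sym_def permutes_id)

lemma mem_right_quot_weak_interval_R_iff:
  assumes x: "x permutes {..<n}" and u: "u permutes {..<n}"
  shows "x \<in> right_quot n (weak_interval_R n u) \<longleftrightarrow>
    perm_length n (x \<circ> u) = perm_length n x + perm_length n u"
proof
  assume "x \<in> right_quot n (weak_interval_R n u)"
  moreover have "u \<in> weak_interval_R n u"
    using weak_le_R_iff[OF u u] permutes_inv_o(2)[OF u] by (simp add: weak_interval_R_def Sym_def u)
  ultimately show "perm_length n (x \<circ> u) = perm_length n x + perm_length n u"
    by (simp add: right_quot_def)
next
  assume "perm_length n (x \<circ> u) = perm_length n x + perm_length n u"
  then show "x \<in> right_quot n (weak_interval_R n u)"
    using length_additive_of_weak_le_R[OF x] x by (auto simp: right_quot_def weak_interval_R_def Sym_def)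
qed

theorem theorem4p5:
  fixes n :: nat and u :: "nat \<Rightarrow> nat"
  assumes "u \<in> Sym n"
  shows "\<forall>w \<in> Sym n. \<exists>x \<in> right_quot n (weak_interval_R n u).
           \<exists>y \<in> weak_interval_R n u. w = x \<circ> y"
proof
  fix w assume "w \<in> Sym n"
  then have w: "w permutes {..<n}" and u: "u permutes {..<n}"
    using assms by (simp_all add: Sym_def)
  let ?C = "\<lambda>y. y \<in> weak_interval_R n u \<and> inversions n y \<subseteq> inversions n w"
  have "?C id"
    using id_mem_weak_interval_R[OF u] by simp
  moreover have "perm_length n y < Suc (perm_length n w)" if "?C y" for y
    using that card_mono[OF finite_inversions] by (auto simp: perm_length_eq_card_inversions less_Suc_eq_le)
  ultimately obtain y where "?C y" and y_max: "\<And>y'. ?C y' \<Longrightarrow> perm_length n y' \<le> perm_length n y"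
    using ex_has_greatest_nat[of ?C id "perm_length n"] by blast
  then have y: "y permutes {..<n}" and "weak_le_R n y u"
    by (auto simp: weak_interval_R_def Sym_def)
  define x where "x = w \<circ> inv y"
  have "perm_length n (x \<circ> u) = perm_length n x + perm_length n u"
  proof (rule ccontr)
    assume "\<not> ?thesis"
    then obtain y' where "y' permutes {..<n}" "weak_le_R n y' u"
      "inversions n y' \<subseteq> inversions n w" "perm_length n y < perm_length n y'"
      using exists_longer_right_factor[OF u w y \<open>weak_le_R n y u\<close>] \<open>?C y\<close> unfolding x_def by blast
    then show False
      using y_max[of y'] by (auto simp: weak_interval_R_def Sym_def)
  qed
  then have "x \<in> right_quot n (weak_interval_R n u)"
    using mem_right_quot_weak_interval_R_iff[OF permutes_compose[OF permutes_inv[OF y] w] u]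
    by (simp add: x_def)
  moreover have "w = x \<circ> y"
    unfolding x_def using permutes_inv_o(2)[OF y] by (simp add: comp_assoc)
  ultimately show "\<exists>x \<in> right_quot n (weak_interval_R n u). \<exists>y \<in> weak_interval_R n u. w = x \<circ> y"
    using \<open>?C y\<close> by blast
qed

end
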